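(* For all integers $d\ge 2$ and $n\ge 2$, every Latin hypercuboid in $\mathrm{LHC}(d,n,n-1)$ is completable.
   Context: $[n]=\{1,\dots,n\}$. For integers $d\ge2$ and $1\le k\le n$, $\mathrm{LHC}(d,n,k)$ denotes the set of $d$-dimensional arrays of dimensions $n\times\cdots\times n\times k$ (the last coordinate ranging over $[k]$, the others over $[n]$) with entries from $[n]$ such that each symbol occurs at most once in each axis-parallel line (a set of cells obtained by fixing all coordinates but one). A hypercuboid $H\in\mathrm{LHC}(d,n,k)$ is completable if it is contained in (i.e. equals the restriction to the first $k$ values of the last coordinate of) some array in $\mathrm{LHC}(d,n,n)$ (a Latin hypercube). *)

theory Defs
  imports Main
begin

definition cells :: "nat \<Rightarrow> nat \<Rightarrow> nat \<Rightarrow> nat list set" where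
  "cells d n k = {c. length c = d \<and> (\<forall>i < d - 1. c ! i \<in> {1..n}) \<and> c ! (d - 1) \<in> {1..k}}"

definition same_line :: "nat list \<Rightarrow> nat list \<Rightarrow> bool" where
  "same_line c c' \<longleftrightarrow> length c = length c' \<and> card {i. i < length c \<and> c ! i \<noteq> c' ! i} = 1"

definition LHC :: "nat \<Rightarrow> nat \<Rightarrow> nat \<Rightarrow> (nat list \<Rightarrow> nat) set" where
  "LHC d n k = {H. (\<forall>c \<in> cells d n k. H c \<in> {1..n})
                 \<and> (\<forall>c \<in> cells d n k. \<forall>c' \<in> cells d n k. same_line c c' \<longrightarrow> H c \<noteq> H c')}"

definition completable :: "nat \<Rightarrow> nat \<Rightarrow> nat \<Rightarrow> (nat list \<Rightarrow> nat) \<Rightarrow> bool" where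
  "completable d n k H \<longleftrightarrow> (\<exists>L \<in> LHC d n n. \<forall>c \<in> cells d n k. L c = H c)"

end

theory Submission
  imports Defs
begin

text \<open>Fill the missing layer by putting into each cell the unique symbol that is absent from
the line through it along the last coordinate. Lines along the last coordinate are then Latin
by construction. For a line along another coordinate \<open>i\<close>, suppose two cells \<open>c\<close>, \<open>c'\<close> of the
new layer received the same symbol \<open>s\<close>. In each of the \<open>n - 1\<close> given layers the line through
\<open>c\<close>, \<open>c'\<close> along \<open>i\<close> is a permutation of \<open>{1..n}\<close>, so \<open>s\<close> occurs in it at an \<open>i\<close>-coordinate
different from those of \<open>c\<close> and \<open>c'\<close>; distinct layers give distinct coordinates, since
otherwise \<open>s\<close> would repeat along the last coordinate. This maps \<open>n - 1\<close> layers injectively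
into \<open>n - 2\<close> coordinates.\<close>

lemma same_line_iff_update:
  "same_line c c' \<longleftrightarrow> (\<exists>i < length c. \<exists>a. a \<noteq> c ! i \<and> c' = c[i := a])"
proof
  assume "same_line c c'"
  then have len: "length c = length c'"
    and card: "card {j. j < length c \<and> c ! j \<noteq> c' ! j} = 1"
    unfolding same_line_def by auto
  from card obtain i where "{j. j < length c \<and> c ! j \<noteq> c' ! j} = {i}"
    by (rule card_1_singletonE)
  then have i: "i < length c" "c ! i \<noteq> c' ! i" "\<forall>j < length c. j \<noteq> i \<longrightarrow> c ! j = c' ! j"
    by blast+
  with len have "c' = c[i := c' ! i]"
    by (intro nth_equalityI) (auto simp: nth_list_update)
  with i show "\<exists>i < length c. \<exists>a. a \<noteq> c ! i \<and> c' = c[i := a]"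
    by (metis (no_types))
next
  assume "\<exists>i < length c. \<exists>a. a \<noteq> c ! i \<and> c' = c[i := a]"
  then obtain i a where i: "i < length c" "a \<noteq> c ! i" "c' = c[i := a]" by blast
  then have "{j. j < length c \<and> c ! j \<noteq> c' ! j} = {i}"
    by (auto simp: nth_list_update)
  with i show "same_line c c'" unfolding same_line_def by simp
qed

lemma same_line_update:
  assumes "i < length c" "a \<noteq> c ! i"
  shows "same_line c (c[i := a])"
  using assms same_line_iff_update by blast

lemma cells_update_inner:
  assumes "c \<in> cells d n k" "i < d - 1" "a \<in> {1..n}"
  shows "c[i := a] \<in> cells d n k"
  using assms unfolding cells_def by (auto simp: nth_list_update)

lemma cells_lower_layer:
  "c \<in> cells d n n \<Longrightarrow> c ! (d - 1) < n \<Longrightarrow> c \<in> cells d n (n - 1)"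
  unfolding cells_def by auto

lemma cells_update_last:
  assumes "c \<in> cells d n k" "0 < d" "t \<in> {1..k'}"
  shows "c[d - 1 := t] \<in> cells d n k'"
  using assms unfolding cells_def by (auto simp: nth_list_update)

lemma LHC_line_inj:
  assumes "H \<in> LHC d n k" "i < length c" "\<forall>a \<in> A. c[i := a] \<in> cells d n k"
  shows "inj_on (\<lambda>a. H (c[i := a])) A"
proof (rule inj_onI)
  fix a b assume ab: "a \<in> A" "b \<in> A" "H (c[i := a]) = H (c[i := b])"
  show "a = b"
  proof (rule ccontr)
    assume "a \<noteq> b"
    then have "same_line (c[i := a]) ((c[i := a])[i := b])"
      using assms(2) by (intro same_line_update) auto
    then show False
      using ab assms unfolding LHC_def by auto
  qed
qed

lemma LHC_line_image_subset:
  assumes "H \<in> LHC d n k" "\<forall>a \<in> A. c[i := a] \<in> cells d n k"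
  shows "(\<lambda>a. H (c[i := a])) ` A \<subseteq> {1..n}"
  using assms unfolding LHC_def by auto

lemma LHC_line_full:
  assumes "H \<in> LHC d n k" "c \<in> cells d n k" "i < d - 1"
  shows "(\<lambda>a. H (c[i := a])) ` {1..n} = {1..n}"
proof -
  have line: "\<forall>a \<in> {1..n}. c[i := a] \<in> cells d n k"
    using assms(2,3) cells_update_inner by blast
  have "i < length c" using assms(2,3) unfolding cells_def by auto
  then have "card ((\<lambda>a. H (c[i := a])) ` {1..n}) = card {1..n}"
    using LHC_line_inj[OF assms(1) _ line] card_image by blast
  then show ?thesis
    using LHC_line_image_subset[OF assms(1) line] by (simp add: card_subset_eq)
qed

definition fibre_symbols :: "nat \<Rightarrow> nat \<Rightarrow> (nat list \<Rightarrow> nat) \<Rightarrow> nat list \<Rightarrow> nat set" where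
  "fibre_symbols d n H c = (\<lambda>t. H (c[d - 1 := t])) ` {1..n - 1}"

definition missing_symbol :: "nat \<Rightarrow> nat \<Rightarrow> (nat list \<Rightarrow> nat) \<Rightarrow> nat list \<Rightarrow> nat" where
  "missing_symbol d n H c = (THE s. s \<in> {1..n} - fibre_symbols d n H c)"

lemma fibre_symbolsI:
  "t \<in> {1..n - 1} \<Longrightarrow> H (c[d - 1 := t]) \<in> fibre_symbols d n H c"
  unfolding fibre_symbols_def by blast

lemma missing_symbol_update_last:
  "missing_symbol d n H (c[d - 1 := x]) = missing_symbol d n H c"
  unfolding missing_symbol_def fibre_symbols_def by (simp only: list_update_overwrite)

lemma fibre_symbols_missing_singleton:
  assumes "H \<in> LHC d n (n - 1)" "0 < d" "0 < n" "c \<in> cells d n k"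
  shows "\<exists>s. {1..n} - fibre_symbols d n H c = {s}"
proof -
  have fibre: "\<forall>t \<in> {1..n - 1}. c[d - 1 := t] \<in> cells d n (n - 1)"
    using cells_update_last[OF assms(4,2)] by blast
  have "d - 1 < length c" using assms(2,4) unfolding cells_def by auto
  then have "card (fibre_symbols d n H c) = n - 1"
    unfolding fibre_symbols_def using LHC_line_inj[OF assms(1) _ fibre] card_image by fastforce
  moreover have "fibre_symbols d n H c \<subseteq> {1..n}"
    unfolding fibre_symbols_def using LHC_line_image_subset[OF assms(1) fibre] .
  ultimately have "card ({1..n} - fibre_symbols d n H c) = 1"
    using assms(3) by (simp add: card_Diff_subset finite_subset)
  then show ?thesis by (rule card_1_singletonE) blast
qed

lemma missing_symbol_spec:
  assumes "H \<in> LHC d n (n - 1)" "0 < d" "0 < n" "c \<in> cells d n k"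
  shows "missing_symbol d n H c \<in> {1..n}" "missing_symbol d n H c \<notin> fibre_symbols d n H c"
proof -
  obtain s where "{1..n} - fibre_symbols d n H c = {s}"
    using fibre_symbols_missing_singleton[OF assms] by blast
  then have "missing_symbol d n H c = s"
    unfolding missing_symbol_def by auto
  with \<open>{1..n} - fibre_symbols d n H c = {s}\<close>
  show "missing_symbol d n H c \<in> {1..n}" "missing_symbol d n H c \<notin> fibre_symbols d n H c"
    by auto
qed

lemma LHC_symbol_positions:
  assumes H: "H \<in> LHC d n (n - 1)" and c: "c \<in> cells d n k"
    and i: "i < d - 1" and s: "s \<in> {1..n}"
  obtains f where "\<And>t. t \<in> {1..n - 1} \<Longrightarrow> f t \<in> {1..n}"
    "\<And>t. t \<in> {1..n - 1} \<Longrightarrow> H ((c[i := f t])[d - 1 := t]) = s"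
    "inj_on f {1..n - 1}"
proof -
  have d: "0 < d" and len: "length c = d" using c i unfolding cells_def by auto
  have swap: "(c[d - 1 := t])[i := b] = (c[i := b])[d - 1 := t]" for t b
    using i by (simp add: list_update_swap)
  have "\<forall>t \<in> {1..n - 1}. \<exists>b. b \<in> {1..n} \<and> H ((c[i := b])[d - 1 := t]) = s"
  proof
    fix t assume t: "t \<in> {1..n - 1}"
    have "s \<in> (\<lambda>b. H ((c[d - 1 := t])[i := b])) ` {1..n}"
      using LHC_line_full[OF H cells_update_last[OF c d t] i] s by simp
    then show "\<exists>b. b \<in> {1..n} \<and> H ((c[i := b])[d - 1 := t]) = s"
      unfolding swap by blast
  qed
  then obtain f where "\<forall>t \<in> {1..n - 1}. f t \<in> {1..n} \<and> H ((c[i := f t])[d - 1 := t]) = s"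
    by (metis (no_types) bchoice)
  then have f: "\<And>t. t \<in> {1..n - 1} \<Longrightarrow> f t \<in> {1..n}"
    "\<And>t. t \<in> {1..n - 1} \<Longrightarrow> H ((c[i := f t])[d - 1 := t]) = s"
    by blast+
  have "inj_on f {1..n - 1}"
  proof (rule inj_onI)
    fix t t' assume t: "t \<in> {1..n - 1}" "t' \<in> {1..n - 1}" and eq: "f t = f t'"
    have "inj_on (\<lambda>u. H ((c[i := f t])[d - 1 := u])) {1..n - 1}"
      using len d cells_update_last[OF cells_update_inner[OF c i f(1)[OF t(1)]] d]
      by (intro LHC_line_inj[OF H]) auto
    moreover have "H ((c[i := f t])[d - 1 := t]) = H ((c[i := f t])[d - 1 := t'])"
      using f(2)[OF t(1)] f(2)[OF t(2)] eq by simp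
    ultimately show "t = t'" using t by (auto dest: inj_onD)
  qed
  with f that show ?thesis by blast
qed

lemma missing_symbol_update_inner:
  assumes H: "H \<in> LHC d n (n - 1)" and c: "c \<in> cells d n k"
    and i: "i < d - 1" and a: "a \<in> {1..n}" "a \<noteq> c ! i"
  shows "missing_symbol d n H (c[i := a]) \<noteq> missing_symbol d n H c"
proof
  have d: "0 < d" and n: "0 < n" and ci: "c ! i \<in> {1..n}"
    using c i a unfolding cells_def by auto
  define s where "s = missing_symbol d n H c"
  assume "missing_symbol d n H (c[i := a]) = missing_symbol d n H c"
  then have s_c: "s \<notin> fibre_symbols d n H c" and s_c': "s \<notin> fibre_symbols d n H (c[i := a])"
    using missing_symbol_spec(2)[OF H d n c] missing_symbol_spec(2)[OF H d n cells_update_inner[OF c i a(1)]]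
    unfolding s_def by auto
  obtain f where f: "\<And>t. t \<in> {1..n - 1} \<Longrightarrow> f t \<in> {1..n}"
      "\<And>t. t \<in> {1..n - 1} \<Longrightarrow> H ((c[i := f t])[d - 1 := t]) = s"
    and inj: "inj_on f {1..n - 1}"
    using LHC_symbol_positions[OF H c i] missing_symbol_spec(1)[OF H d n c] unfolding s_def by blast
  have "f t \<in> {1..n} - {c ! i, a}" if t: "t \<in> {1..n - 1}" for t
  proof -
    have "s \<in> fibre_symbols d n H (c[i := f t])"
      using fibre_symbolsI[OF t] f(2)[OF t] by metis
    then show ?thesis using f(1)[OF t] s_c s_c' by auto
  qed
  then have "f ` {1..n - 1} \<subseteq> {1..n} - {c ! i, a}"
    by (rule image_subsetI)
  then have "card (f ` {1..n - 1}) \<le> card ({1..n} - {c ! i, a})"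
    by (rule card_mono[rotated]) simp
  moreover have "card (f ` {1..n - 1}) = n - 1" using inj by (simp add: card_image)
  moreover have "card ({1..n} - {c ! i, a}) = n - 2"
    using ci a by (subst card_Diff_subset) auto
  moreover have "2 \<le> n" using ci a by auto
  ultimately show False by linarith
qed

definition completion :: "nat \<Rightarrow> nat \<Rightarrow> (nat list \<Rightarrow> nat) \<Rightarrow> nat list \<Rightarrow> nat" where
  "completion d n H c = (if c ! (d - 1) < n then H c else missing_symbol d n H c)"

lemma completion_range:
  assumes "H \<in> LHC d n (n - 1)" "0 < d" "0 < n" "c \<in> cells d n n"
  shows "completion d n H c \<in> {1..n}"
  using assms cells_lower_layer[OF assms(4)] missing_symbol_spec(1)[OF assms]
  unfolding completion_def LHC_def by auto

lemma completion_same_line: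
  assumes H: "H \<in> LHC d n (n - 1)" and d: "0 < d"
    and c: "c \<in> cells d n n" and c': "c' \<in> cells d n n" and line: "same_line c c'"
  shows "completion d n H c \<noteq> completion d n H c'"
proof -
  have n: "0 < n" and len: "length c = d" using c d unfolding cells_def by auto
  obtain i a where i: "i < d" "a \<noteq> c ! i" and c'_eq: "c' = c[i := a]"
    using line len by (auto simp: same_line_iff_update)
  have lower: "H c \<noteq> H c'" if "c ! (d - 1) < n" "c' ! (d - 1) < n"
    using H c c' line that cells_lower_layer unfolding LHC_def by blast
  have missing_ne: "missing_symbol d n H c \<noteq> H (c[d - 1 := t])" if "t \<in> {1..n - 1}" for t
    using missing_symbol_spec(2)[OF H d n c] fibre_symbolsI[OF that] by auto
  show ?thesis
  proof (cases "i = d - 1")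
    case True
    have a: "a \<in> {1..n}" using c' c'_eq True len d unfolding cells_def by auto
    have c'_last: "c' ! (d - 1) = a" using c'_eq True len d by simp
    have same_missing: "missing_symbol d n H c' = missing_symbol d n H c"
      unfolding c'_eq True by (rule missing_symbol_update_last)
    have c_last: "c ! (d - 1) \<in> {1..n}" using c unfolding cells_def by auto
    then consider "c ! (d - 1) < n" "a < n" | "c ! (d - 1) < n" "a = n" | "c ! (d - 1) = n" "a < n"
      using a i(2) True by fastforce
    then show ?thesis
    proof cases
      case 1
      then show ?thesis using lower c'_last unfolding completion_def by auto
    next
      case 2
      then have "completion d n H c = H (c[d - 1 := c ! (d - 1)])"
        "completion d n H c' = missing_symbol d n H c"
        using c'_last same_missing unfolding completion_def by auto
      moreover have "c ! (d - 1) \<in> {1..n - 1}" using 2 c_last by auto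
      ultimately show ?thesis using missing_ne by metis
    next
      case 3
      then have "completion d n H c = missing_symbol d n H c"
        "completion d n H c' = H (c[d - 1 := a])"
        using c'_last c'_eq True unfolding completion_def by auto
      then show ?thesis using missing_ne[of a] 3 a by auto
    qed
  next
    case False
    then have inner: "i < d - 1" using i(1) by simp
    have a: "a \<in> {1..n}" using c' c'_eq inner len unfolding cells_def by auto
    have "c' ! (d - 1) = c ! (d - 1)" using c'_eq False by simp
    then show ?thesis
      using lower missing_symbol_update_inner[OF H c inner a i(2)] c'_eq
      unfolding completion_def by auto
  qed
qed

lemma completion_LHC:
  assumes "H \<in> LHC d n (n - 1)" "0 < d" "0 < n"
  shows "completion d n H \<in> LHC d n n"
  unfolding LHC_def using completion_range[OF assms] completion_same_line[OF assms(1,2)] by blast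

theorem mainTheorem4:
  fixes d n :: nat and H :: "nat list \<Rightarrow> nat"
  assumes "d \<ge> 2" and "n \<ge> 2" and "H \<in> LHC d n (n - 1)"
  shows "completable d n (n - 1) H"
proof -
  have "completion d n H \<in> LHC d n n"
    using assms by (intro completion_LHC) auto
  moreover have "\<forall>c \<in> cells d n (n - 1). completion d n H c = H c"
    unfolding completion_def cells_def using assms(2) by auto
  ultimately show ?thesis unfolding completable_def by blast
qed

end
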